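(* Let $n\ge1$ and let $i$ be an index such that $R_{n,i}=\max_{0\le k\le n}R_{n,k}$. If $(2n-1)/3$ is an integer, then $i=(2n-1)/3$; otherwise $i=\lfloor (2n-1)/3\rfloor$ or $i=\lceil (2n-1)/3\rceil$.
   Context: Let $D$ be the derivation of $\mathbb{Q}[y,z]$ with $D(y)=z^2$, $D(z)=yz$ (corresponding to $d/dx$ with $y=\tan x$, $z=\sec x$). The integers $R_{n,k}$ are defined for $n\ge1$ by $D^n(y+z)=\sum_{k=0}^nR_{n,k}y^{n-k}z^{k+1}$ in $\mathbb{Q}[y,z]$. Equivalently, with $R_n(x)=\sum_{k=0}^nR_{n,k}x^k$: $R_1(x)=1+x$ and $R_{n+1}(x)=(1+nx^2)R_n(x)+x(1-x^2)R_n'(x)$ for $n\ge1$. *)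

theory Defs
  imports Complex_Main "HOL-Computational_Algebra.Polynomial"
begin

text \<open>The polynomials R_n(x) = sum_k R_{n,k} x^k, defined for n >= 1 by
  R_1(x) = 1 + x and R_{n+1}(x) = (1 + n x^2) R_n(x) + x (1 - x^2) R_n'(x).
  The value at n = 0 is an irrelevant dummy (0).\<close>

fun Rpoly :: "nat \<Rightarrow> int poly" where
  "Rpoly 0 = 0"
| "Rpoly (Suc 0) = [:1, 1:]"
| "Rpoly (Suc (Suc m)) =
     (1 + smult (int (Suc m)) ([:0, 1:] ^ 2)) * Rpoly (Suc m)
     + [:0, 1:] * (1 - [:0, 1:] ^ 2) * pderiv (Rpoly (Suc m))"

definition Rnk :: "nat \<Rightarrow> nat \<Rightarrow> int" where
  "Rnk n k = coeff (Rpoly n) k"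

end

theory Submission
  imports Defs
begin

text \<open>The polynomial R_n is real-rooted with all roots in [-1, 0): it factors as
  (1 + x)^(n div 2 + 1) Q_n, where Q_n has (n - 1) div 2 simple roots in (-1, 0) and each Q_(n+1)
  is obtained from Q_n by a first-order differential operator whose values at the roots of Q_n
  alternate in sign. Hence R_n is a positive multiple of a product of Bernoulli generating
  functions (1 - p_j + p_j x) with 0 < p_j < 1, so its coefficients are proportional to the law
  of a sum of independent Bernoulli variables. By Darroch's theorem every mode of such a law
  lies strictly within distance 1 of its mean, and the mean is
  R_n'(1) / R_n(1) = (2n - 1)/3, which follows from the recurrence by induction.\<close>

definition bernoulli_pgf :: "real \<Rightarrow> real poly" where
  "bernoulli_pgf q = [:1 - q, q:]"

lemma poly_bernoulli_pgf [simp]: "poly (bernoulli_pgf q) x = 1 - q + q * x"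
  by (simp add: bernoulli_pgf_def)

lemma pderiv_bernoulli_pgf [simp]: "pderiv (bernoulli_pgf q) = [:q:]"
  by (simp add: bernoulli_pgf_def pderiv_pCons)

lemma coeff_bernoulli_pgf_mult:
  "coeff (bernoulli_pgf q * g) k = (1 - q) * coeff g k + q * coeff (pCons 0 g) k"
  by (cases k) (auto simp: bernoulli_pgf_def)

lemma reflect_bernoulli_pgf:
  "q \<noteq> 0 \<Longrightarrow> reflect_poly (bernoulli_pgf q) = bernoulli_pgf (1 - q)"
  by (simp add: bernoulli_pgf_def reflect_poly_def)

lemma degree_prod_bernoulli_pgf:
  assumes "finite A" "\<forall>j\<in>A. p j \<noteq> 0"
  shows "degree (\<Prod>j\<in>A. bernoulli_pgf (p j)) = card A"
proof -
  have "degree (\<Prod>j\<in>A. bernoulli_pgf (p j)) = (\<Sum>j\<in>A. degree (bernoulli_pgf (p j)))"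
    using assms(2) by (intro degree_prod_eq_sum_degree) (auto simp: bernoulli_pgf_def)
  also have "\<dots> = card A"
    using assms(2) by (simp add: bernoulli_pgf_def)
  finally show ?thesis .
qed

lemma coeff_prod_bernoulli_pgf_nonneg:
  assumes "finite A" "\<forall>j\<in>A. 0 \<le> p j \<and> p j \<le> 1"
  shows "0 \<le> coeff (\<Prod>j\<in>A. bernoulli_pgf (p j)) k"
  using assms
proof (induction A arbitrary: k rule: finite_induct)
  case (insert j A)
  then show ?case
    by (cases k) (auto simp: coeff_bernoulli_pgf_mult)
qed simp

lemma coeff_prod_bernoulli_pgf_pos:
  assumes "finite A" "\<forall>j\<in>A. 0 < p j \<and> p j < 1" "k \<le> card A"
  shows "0 < coeff (\<Prod>j\<in>A. bernoulli_pgf (p j)) k"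
  using assms
proof (induction A arbitrary: k rule: finite_induct)
  case (insert j A)
  have nonneg: "0 \<le> coeff (\<Prod>i\<in>A. bernoulli_pgf (p i)) k'" for k'
    using insert by (intro coeff_prod_bernoulli_pgf_nonneg) auto
  have pj: "0 < p j" "p j < 1"
    using insert.prems by auto
  consider "k \<le> card A" | "k = Suc (card A)"
    using insert by force
  then show ?case
  proof cases
    case 1
    then show ?thesis
      using insert nonneg[of "k - 1"] pj
      by (cases k) (auto simp: coeff_bernoulli_pgf_mult intro: add_pos_nonneg)
  next
    case 2
    then show ?thesis
      using insert nonneg[of k] pj by (auto simp: coeff_bernoulli_pgf_mult intro: add_nonneg_pos)
  qed
qed simp

lemma coeff_prod_bernoulli_pgf_remove:
  assumes "finite A" "j \<in> A"
  shows "coeff (\<Prod>i\<in>A. bernoulli_pgf (p i)) k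
    = (1 - p j) * coeff (\<Prod>i\<in>A - {j}. bernoulli_pgf (p i)) k
      + p j * coeff (pCons 0 (\<Prod>i\<in>A - {j}. bernoulli_pgf (p i))) k"
  using assms by (simp add: prod.remove coeff_bernoulli_pgf_mult)

lemma of_nat_mult_coeff_prod_bernoulli_pgf:
  assumes "finite A"
  shows "of_nat k * coeff (\<Prod>i\<in>A. bernoulli_pgf (p i)) k
    = (\<Sum>j\<in>A. p j * coeff (pCons 0 (\<Prod>i\<in>A - {j}. bernoulli_pgf (p i))) k)"
proof (cases k)
  case (Suc t)
  then have "of_nat k * coeff (\<Prod>i\<in>A. bernoulli_pgf (p i)) k
      = coeff (pderiv (\<Prod>i\<in>A. bernoulli_pgf (p i))) t"
    by (simp add: coeff_pderiv)
  also have "\<dots> = (\<Sum>j\<in>A. p j * coeff (pCons 0 (\<Prod>i\<in>A - {j}. bernoulli_pgf (p i))) k)"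
    using Suc by (simp add: pderiv_prod coeff_sum mult.commute)
  finally show ?thesis .
qed simp

lemma poly_prod_bernoulli_pgf_1: "poly (\<Prod>j\<in>A. bernoulli_pgf (p j)) 1 = 1"
  by (simp add: poly_prod)

lemma poly_pderiv_prod_bernoulli_pgf_1:
  "finite A \<Longrightarrow> poly (pderiv (\<Prod>j\<in>A. bernoulli_pgf (p j))) 1 = (\<Sum>j\<in>A. p j)"
  by (simp add: pderiv_prod poly_sum poly_prod)

lemma prod_bernoulli_pgf_coeff_step:
  assumes "finite A"
  shows "of_nat (Suc t) * coeff (\<Prod>i\<in>A. bernoulli_pgf (p i)) (Suc t)
      - (\<Sum>j\<in>A. p j) * coeff (\<Prod>i\<in>A. bernoulli_pgf (p i)) t
    = (\<Sum>j\<in>A. p j ^ 2 * (coeff (\<Prod>i\<in>A - {j}. bernoulli_pgf (p i)) t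
                           - coeff (pCons 0 (\<Prod>i\<in>A - {j}. bernoulli_pgf (p i))) t))"
proof -
  have "of_nat (Suc t) * coeff (\<Prod>i\<in>A. bernoulli_pgf (p i)) (Suc t)
      = (\<Sum>j\<in>A. p j * coeff (\<Prod>i\<in>A - {j}. bernoulli_pgf (p i)) t)"
    by (simp add: of_nat_mult_coeff_prod_bernoulli_pgf[OF assms] del: of_nat_Suc)
  moreover have "(\<Sum>j\<in>A. p j) * coeff (\<Prod>i\<in>A. bernoulli_pgf (p i)) t
      = (\<Sum>j\<in>A. p j * ((1 - p j) * coeff (\<Prod>i\<in>A - {j}. bernoulli_pgf (p i)) t
                        + p j * coeff (pCons 0 (\<Prod>i\<in>A - {j}. bernoulli_pgf (p i))) t))"
    unfolding sum_distrib_right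
    by (intro sum.cong refl) (simp add: coeff_prod_bernoulli_pgf_remove[OF assms])
  ultimately show ?thesis
    by (simp only: flip: sum_subtractf) (simp add: power2_eq_square algebra_simps)
qed

text \<open>Darroch's theorem, by induction on card A: in the identity above, every summand on the
  right is positive by the induction hypothesis for A - {j}.\<close>

lemma coeff_prod_bernoulli_pgf_increasing:
  assumes "finite A" "\<forall>j\<in>A. 0 < p j \<and> p j < 1" "real (Suc t) \<le> (\<Sum>j\<in>A. p j)"
  shows "coeff (\<Prod>j\<in>A. bernoulli_pgf (p j)) t < coeff (\<Prod>j\<in>A. bernoulli_pgf (p j)) (Suc t)"
  using assms
proof (induction "card A" arbitrary: A t rule: less_induct)
  case less
  define g where "g j = coeff (\<Prod>i\<in>A - {j}. bernoulli_pgf (p i))" for j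
  have g_step: "coeff (pCons 0 (\<Prod>i\<in>A - {j}. bernoulli_pgf (p i))) t < g j t" if "j \<in> A" for j
  proof (cases t)
    case 0
    then show ?thesis
      using less.prems(1,2) by (auto simp: g_def intro!: coeff_prod_bernoulli_pgf_pos)
  next
    case (Suc s)
    have "p j < 1"
      using less.prems(2) that by blast
    then have "real (Suc s) \<le> (\<Sum>i\<in>A - {j}. p i)"
      using less.prems(1,3) Suc that by (simp add: sum_diff1)
    then have "g j s < g j (Suc s)"
      unfolding g_def using less.prems(1,2) that
      by (intro less.hyps[OF card_Diff1_less]) auto
    then show ?thesis
      using Suc by (simp add: g_def)
  qed
  have "A \<noteq> {}"
    using less.prems(3) by auto
  then have "0 < (\<Sum>j\<in>A. p j ^ 2 * (g j t - coeff (pCons 0 (\<Prod>i\<in>A - {j}. bernoulli_pgf (p i))) t))"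
    using less.prems(1,2) g_step by (intro sum_pos) auto
  then have "(\<Sum>j\<in>A. p j) * coeff (\<Prod>i\<in>A. bernoulli_pgf (p i)) t
      < of_nat (Suc t) * coeff (\<Prod>i\<in>A. bernoulli_pgf (p i)) (Suc t)"
    using prod_bernoulli_pgf_coeff_step[OF less.prems(1), of t p] by (simp add: g_def)
  moreover have "of_nat (Suc t) * coeff (\<Prod>i\<in>A. bernoulli_pgf (p i)) t
      \<le> (\<Sum>j\<in>A. p j) * coeff (\<Prod>i\<in>A. bernoulli_pgf (p i)) t"
    using less.prems by (intro mult_right_mono coeff_prod_bernoulli_pgf_nonneg) auto
  ultimately have "of_nat (Suc t) * coeff (\<Prod>i\<in>A. bernoulli_pgf (p i)) t
      < of_nat (Suc t) * coeff (\<Prod>i\<in>A. bernoulli_pgf (p i)) (Suc t)"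
    by linarith
  then show ?case
    by (rule mult_left_less_imp_less) simp
qed

text \<open>Reversing the coefficient list of a product of Bernoulli generating functions
  replaces every p by 1 - p; this turns the increasing half of Darroch's theorem into the
  decreasing half.\<close>

lemma coeff_prod_bernoulli_pgf_complement:
  assumes "finite A" "\<forall>j\<in>A. p j \<noteq> 0" "k \<le> card A"
  shows "coeff (\<Prod>j\<in>A. bernoulli_pgf (1 - p j)) k = coeff (\<Prod>j\<in>A. bernoulli_pgf (p j)) (card A - k)"
proof -
  have "(\<Prod>j\<in>A. bernoulli_pgf (1 - p j)) = reflect_poly (\<Prod>j\<in>A. bernoulli_pgf (p j))"
    using assms(2) by (simp add: reflect_poly_prod reflect_bernoulli_pgf)
  then show ?thesis
    using assms by (simp add: coeff_reflect_poly degree_prod_bernoulli_pgf)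
qed

lemma coeff_prod_bernoulli_pgf_decreasing:
  assumes "finite A" "\<forall>j\<in>A. 0 < p j \<and> p j < 1" "Suc k \<le> card A" "(\<Sum>j\<in>A. p j) \<le> real k"
  shows "coeff (\<Prod>j\<in>A. bernoulli_pgf (p j)) (Suc k) < coeff (\<Prod>j\<in>A. bernoulli_pgf (p j)) k"
proof -
  define t where "t = card A - Suc k"
  have "real (Suc t) \<le> (\<Sum>j\<in>A. 1 - p j)"
    using assms(3,4) by (simp add: t_def sum_subtractf)
  then have "coeff (\<Prod>j\<in>A. bernoulli_pgf (1 - p j)) t < coeff (\<Prod>j\<in>A. bernoulli_pgf (1 - p j)) (Suc t)"
    using assms(1,2) by (intro coeff_prod_bernoulli_pgf_increasing) auto
  moreover have "card A - t = Suc k" "card A - Suc t = k"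
    using assms(3) by (simp_all add: t_def)
  moreover have "t \<le> card A" "Suc t \<le> card A"
    using assms(3) by (simp_all add: t_def)
  ultimately show ?thesis
    using assms(2) coeff_prod_bernoulli_pgf_complement[OF assms(1), of p]
    by (metis less_irrefl)
qed

lemma prod_bernoulli_pgf_mode_near_mean:
  assumes "finite A" "\<forall>j\<in>A. 0 < p j \<and> p j < 1" "i \<le> card A"
    and max: "\<And>k. k \<le> card A \<Longrightarrow> coeff (\<Prod>j\<in>A. bernoulli_pgf (p j)) k \<le> coeff (\<Prod>j\<in>A. bernoulli_pgf (p j)) i"
  shows "\<bar>real i - (\<Sum>j\<in>A. p j)\<bar> < 1"
proof -
  have mean_le: "(\<Sum>j\<in>A. p j) \<le> real (card A)"
    using assms(2) sum_bounded_above[of A p 1] by fastforce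
  have "0 \<le> (\<Sum>j\<in>A. p j)"
    using assms(2) by (simp add: sum_nonneg less_imp_le)
  moreover have "\<not> real (Suc i) \<le> (\<Sum>j\<in>A. p j)"
    using max[of "Suc i"] coeff_prod_bernoulli_pgf_increasing[OF assms(1,2), of i] mean_le
    by linarith
  moreover have "real k < (\<Sum>j\<in>A. p j)" if "i = Suc k" for k
    using max[of k] coeff_prod_bernoulli_pgf_decreasing[OF assms(1,2), of k] assms(3) that
    by fastforce
  ultimately show ?thesis
    by (cases i) auto
qed

text \<open>The roots are kept simple and sorted so that the sign of the derivative at the
  j-th root is known; this drives the interlacing argument below.\<close>

definition neg_unit_rooted :: "nat \<Rightarrow> real poly \<Rightarrow> bool" where
  "neg_unit_rooted d P \<longleftrightarrow> (\<exists>c r. 0 < c \<and> strict_mono_on {..<d} r \<and> r ` {..<d} \<subseteq> {-1<..<0}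
      \<and> P = smult c (\<Prod>i<d. [:- r i, 1:]))"

lemma poly_eq_smult_prod_linear_of_roots:
  fixes P :: "real poly" and s :: "nat \<Rightarrow> real"
  assumes "degree P \<le> K" "\<And>i. i < K \<Longrightarrow> poly P (s i) = 0" "inj_on s {..<K}"
  shows "P = smult (coeff P K) (\<Prod>i<K. [:- s i, 1:])"
  using assms
proof (induction K arbitrary: P)
  case 0
  then show ?case
    by (auto elim: degree_eq_zeroE)
next
  case (Suc K)
  have "[:- s K, 1:] dvd P"
    using Suc.prems(2)[of K] by (simp add: poly_eq_0_iff_dvd)
  then obtain P' where P: "P = [:- s K, 1:] * P'"
    by (elim dvdE)
  have "degree P' \<le> K"
  proof (cases "P' = 0")
    case False
    then have "degree P = Suc (degree P')"
      unfolding P by (subst degree_mult_eq) auto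
    then show ?thesis
      using Suc.prems(1) by simp
  qed simp
  moreover have "poly P' (s i) = 0" if "i < K" for i
    using Suc.prems(2)[of i] Suc.prems(3) that unfolding P by (auto simp: inj_on_def)
  moreover have "inj_on s {..<K}"
    using Suc.prems(3) by (rule inj_on_subset) auto
  ultimately have "P' = smult (coeff P' K) (\<Prod>i<K. [:- s i, 1:])"
    by (rule Suc.IH)
  then have "P = smult (coeff P' K) ([:- s K, 1:] * (\<Prod>i<K. [:- s i, 1:]))"
    using P by (metis mult_smult_right)
  moreover have "coeff P (Suc K) = coeff P' K"
    using \<open>degree P' \<le> K\<close> unfolding P by (simp add: coeff_eq_0)
  ultimately show ?case
    by (simp only: prod.lessThan_Suc mult.commute)
qed

lemma roots_between_alternating_signs:
  fixes P :: "real poly" and t :: "nat \<Rightarrow> real"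
  assumes t_step: "\<And>i. i < d \<Longrightarrow> t i < t (Suc i)"
    and sign: "\<And>i. i \<le> d \<Longrightarrow> 0 < (-1) ^ (d - i) * poly P (t i)"
  obtains s where "\<And>i. i < d \<Longrightarrow> t i < s i \<and> s i < t (Suc i) \<and> poly P (s i) = 0"
proof -
  have "\<exists>x>t i. x < t (Suc i) \<and> poly P x = 0" if "i < d" for i
  proof -
    have "d - i = Suc (d - Suc i)"
      using that by simp
    then have "0 < - ((-1) ^ (d - Suc i) * poly P (t i))"
      using sign[of i] that by simp
    moreover have "0 < (-1) ^ (d - Suc i) * poly P (t (Suc i))"
      using sign[of "Suc i"] that by simp
    ultimately have "0 < - ((-1) ^ (d - Suc i) * poly P (t i)) * ((-1) ^ (d - Suc i) * poly P (t (Suc i)))"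
      by (rule mult_pos_pos)
    then have "poly P (t i) * poly P (t (Suc i)) < 0"
      by (simp add: algebra_simps)
    then show ?thesis
      using poly_IVT[OF t_step[OF that]] by blast
  qed
  then show ?thesis
    using that by metis
qed

lemma neg_unit_rooted_if_sign_alternates:
  fixes P :: "real poly" and t :: "nat \<Rightarrow> real"
  assumes deg: "degree P \<le> d"
    and t_step: "\<And>i. i < d \<Longrightarrow> t i < t (Suc i)" and t_first: "-1 \<le> t 0" and t_last: "t d = 0"
    and sign: "\<And>i. i \<le> d \<Longrightarrow> 0 < (-1) ^ (d - i) * poly P (t i)"
  shows "neg_unit_rooted d P"
proof -
  obtain s where s: "\<And>i. i < d \<Longrightarrow> t i < s i \<and> s i < t (Suc i) \<and> poly P (s i) = 0"
    using roots_between_alternating_signs[of d t P] t_step sign by blast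
  have t_less: "t i < t j" if "i < j" "j \<le> d" for i j
  proof (rule lift_Suc_mono_less_ivl[where N = "{..<d}"])
    show "{i..<j} \<subseteq> {..<d}"
      using that by auto
  qed (use that t_step in auto)
  have s_mono: "strict_mono_on {..<d} s"
  proof (rule strict_mono_onI)
    fix i j assume "i \<in> {..<d}" "j \<in> {..<d}" "i < j"
    then show "s i < s j"
      using s[of i] s[of j] t_less[of "Suc i" j] by (cases "Suc i = j") auto
  qed
  have s_range: "s ` {..<d} \<subseteq> {-1<..<0}"
  proof (intro image_subsetI)
    fix i assume "i \<in> {..<d}"
    then show "s i \<in> {-1<..<0}"
      using s[of i] t_less[of 0 i] t_less[of "Suc i" d] t_first t_last
      by (cases "i = 0"; cases "Suc i = d") fastforce+
  qed
  have P: "P = smult (coeff P d) (\<Prod>i<d. [:- s i, 1:])"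
    using deg s strict_mono_on_imp_inj_on[OF s_mono] by (intro poly_eq_smult_prod_linear_of_roots) auto
  have "0 < poly P 0"
    using sign[of d] t_last by simp
  moreover have "poly P 0 = coeff P d * (\<Prod>i<d. - s i)"
    by (subst P) (simp add: poly_prod)
  moreover have "0 < (\<Prod>i<d. - s i)"
    using s_range by (intro prod_pos) auto
  ultimately have "0 < coeff P d"
    by (simp add: zero_less_mult_iff)
  then show ?thesis
    unfolding neg_unit_rooted_def using s_mono s_range P by blast
qed

lemma sign_pderiv_prod_linear_at_root:
  fixes r :: "nat \<Rightarrow> real"
  assumes mono: "strict_mono_on {..<d} r" and j: "j < d"
  shows "0 < (-1) ^ (d - Suc j) * poly (pderiv (\<Prod>i<d. [:- r i, 1:])) (r j)"
proof -
  have "poly (pderiv (\<Prod>i<d. [:- r i, 1:])) (r j) = (\<Sum>a<d. \<Prod>i\<in>{..<d} - {a}. r j - r i)"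
    by (simp add: pderiv_prod poly_sum poly_prod pderiv_pCons)
  also have "\<dots> = (\<Prod>i\<in>{..<d} - {j}. r j - r i)"
  proof -
    have "(\<Sum>a\<in>{..<d} - {j}. \<Prod>i\<in>{..<d} - {a}. r j - r i) = 0"
      using j by (intro sum.neutral ballI) (auto intro!: bexI[of _ j])
    then show ?thesis
      using j by (simp add: sum.remove[of _ j])
  qed
  also have "{..<d} - {j} = {..<j} \<union> {Suc j..<d}"
    using j by auto
  also have "(\<Prod>i\<in>{..<j} \<union> {Suc j..<d}. r j - r i)
      = (\<Prod>i<j. r j - r i) * (\<Prod>i\<in>{Suc j..<d}. r j - r i)"
    by (rule prod.union_disjoint) auto
  also have "(\<Prod>i\<in>{Suc j..<d}. r j - r i) = (-1) ^ (d - Suc j) * (\<Prod>i\<in>{Suc j..<d}. r i - r j)"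
    using prod_uminus[of "\<lambda>i. r i - r j" "{Suc j..<d}"] by simp
  finally have "(-1) ^ (d - Suc j) * poly (pderiv (\<Prod>i<d. [:- r i, 1:])) (r j)
      = (\<Prod>i<j. r j - r i) * (\<Prod>i\<in>{Suc j..<d}. r i - r j)"
    by (simp add: algebra_simps)
  also have "0 < \<dots>"
    using j strict_mono_onD[OF mono] by (intro mult_pos_pos prod_pos) auto
  finally show ?thesis .
qed

lemma neg_unit_rooted_degree:
  assumes "neg_unit_rooted d P"
  shows "degree P \<le> d"
proof -
  obtain c r where "P = smult c (\<Prod>i<d. [:- r i, 1:])"
    using assms unfolding neg_unit_rooted_def by blast
  then have "degree P \<le> (\<Sum>i<d. degree [:- r i, 1:])"
    using degree_prod_sum_le[of "{..<d}" "\<lambda>i. [:- r i, 1:]"] by (simp add: o_def)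
  then show ?thesis
    by simp
qed

lemma neg_unit_rooted_poly_0:
  assumes "neg_unit_rooted d P"
  shows "0 < poly P 0"
proof -
  obtain c r where c: "0 < c" and r: "r ` {..<d} \<subseteq> {-1<..<0}" and P: "P = smult c (\<Prod>i<d. [:- r i, 1:])"
    using assms unfolding neg_unit_rooted_def by blast
  have "0 < (\<Prod>i<d. - r i)"
    using r by (intro prod_pos) auto
  then show ?thesis
    using c by (simp add: P poly_prod)
qed

lemma neg_unit_rooted_poly_minus_one:
  assumes "neg_unit_rooted d P"
  shows "0 < (-1) ^ d * poly P (-1)"
proof -
  obtain c r where c: "0 < c" and r: "r ` {..<d} \<subseteq> {-1<..<0}" and P: "P = smult c (\<Prod>i<d. [:- r i, 1:])"
    using assms unfolding neg_unit_rooted_def by blast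
  have "(-1) ^ d * poly P (-1) = c * ((-1) ^ d * (\<Prod>i<d. - (1 + r i)))"
    unfolding P by (simp add: poly_prod algebra_simps)
  also have "\<dots> = c * (\<Prod>i<d. 1 + r i)"
    by (simp only: prod_uminus card_lessThan left_minus_one_mult_self)
  also have "0 < \<dots>"
    using c r by (auto intro!: mult_pos_pos prod_pos)
  finally show ?thesis .
qed

lemma sign_at_root_add_mult_pderiv:
  fixes r :: "nat \<Rightarrow> real"
  assumes "0 < c" "strict_mono_on {..<d} r" "j < d" "poly B (r j) < 0"
  defines "P \<equiv> smult c (\<Prod>i<d. [:- r i, 1:])"
  shows "0 < (-1) ^ (d - j) * poly (A * P + B * pderiv P) (r j)"
proof -
  have "poly (\<Prod>i<d. [:- r i, 1:]) (r j) = 0"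
    using assms(3) by (simp add: poly_prod) (use assms(3) in blast)
  moreover have "d - j = Suc (d - Suc j)"
    using assms(3) by simp
  ultimately have "(-1) ^ (d - j) * poly (A * P + B * pderiv P) (r j)
      = c * (- poly B (r j)) * ((-1) ^ (d - Suc j) * poly (pderiv (\<Prod>i<d. [:- r i, 1:])) (r j))"
    by (simp add: P_def pderiv_smult algebra_simps)
  also have "0 < \<dots>"
    by (rule mult_pos_pos)
      (use assms(1,4) sign_pderiv_prod_linear_at_root[OF assms(2,3)] in \<open>simp_all add: mult_pos_neg\<close>)
  finally show ?thesis .
qed

lemma degree_odd_step:
  fixes Q :: "real poly"
  assumes "degree Q \<le> d"
  shows "degree ([:1, of_nat d:] * Q + [:0, 1, -1:] * pderiv Q) \<le> d"
proof (rule degree_le, intro allI impI)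
  fix i assume "d < i"
  then show "coeff ([:1, of_nat d:] * Q + [:0, 1, -1:] * pderiv Q) i = 0"
    using assms by (cases "i = Suc d"; cases i; cases "i - 1")
      (auto simp: coeff_pderiv coeff_eq_0 algebra_simps)
qed

lemma degree_even_step:
  fixes Q :: "real poly"
  assumes "degree Q \<le> d"
  shows "degree ([:1, of_nat d + 2, of_nat d:] * Q + [:0, 1, 0, -1:] * pderiv Q) \<le> Suc d"
proof (rule degree_le, intro allI impI)
  fix i assume "Suc d < i"
  then show "coeff ([:1, of_nat d + 2, of_nat d:] * Q + [:0, 1, 0, -1:] * pderiv Q) i = 0"
    using assms by (cases "i = Suc (Suc d)"; cases i; cases "i - 1"; cases "i - 2")
      (auto simp: coeff_pderiv coeff_eq_0 algebra_simps)
qed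

text \<open>At a root r of Q the polynomial A Q + B Q' reduces to B(r) Q'(r), so with B < 0 on
  (-1, 0) its signs alternate along the roots of Q. The odd step gains its sign changes from
  these and the value Q(0) > 0; the even step additionally uses the value at -1 to acquire
  one new root.\<close>

lemma neg_unit_rooted_odd_step:
  assumes "neg_unit_rooted d Q"
  shows "neg_unit_rooted d ([:1, of_nat d:] * Q + [:0, 1, -1:] * pderiv Q)"
proof -
  obtain c r where c: "0 < c" and mono: "strict_mono_on {..<d} r"
    and r: "r ` {..<d} \<subseteq> {-1<..<0}" and Q: "Q = smult c (\<Prod>i<d. [:- r i, 1:])"
    using assms unfolding neg_unit_rooted_def by blast
  define t where "t i = (if i < d then r i else 0)" for i
  show ?thesis
  proof (rule neg_unit_rooted_if_sign_alternates)
    show "degree ([:1, of_nat d:] * Q + [:0, 1, -1:] * pderiv Q) \<le> d"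
      by (intro degree_odd_step neg_unit_rooted_degree assms)
    show "t i < t (Suc i)" if "i < d" for i
      using that r strict_mono_onD[OF mono, of i "Suc i"] by (auto simp: t_def)
    show "-1 \<le> t 0" "t d = 0"
      using r by (auto simp: t_def less_imp_le)
    show "0 < (-1) ^ (d - i) * poly ([:1, of_nat d:] * Q + [:0, 1, -1:] * pderiv Q) (t i)"
      if "i \<le> d" for i
    proof (cases "i < d")
      case True
      have "poly [:0, 1, -1:] (r i) < 0"
        using r True by (auto simp: algebra_simps mult_neg_neg)
      moreover have "t i = r i"
        using True by (simp add: t_def)
      ultimately show ?thesis
        using sign_at_root_add_mult_pderiv[OF c mono True, of "[:0, 1, -1:]" "[:1, of_nat d:]"] by (simp add: Q)
    qed (use that neg_unit_rooted_poly_0[OF assms] in \<open>simp add: t_def\<close>)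
  qed
qed

lemma neg_unit_rooted_even_step:
  assumes "neg_unit_rooted d Q"
  shows "neg_unit_rooted (Suc d) ([:1, of_nat d + 2, of_nat d:] * Q + [:0, 1, 0, -1:] * pderiv Q)"
    (is "neg_unit_rooted _ ?Q")
proof -
  obtain c r where c: "0 < c" and mono: "strict_mono_on {..<d} r"
    and r: "r ` {..<d} \<subseteq> {-1<..<0}" and Q: "Q = smult c (\<Prod>i<d. [:- r i, 1:])"
    using assms unfolding neg_unit_rooted_def by blast
  define t where "t i = (if i = 0 then -1 else if i \<le> d then r (i - 1) else 0)" for i
  show ?thesis
  proof (rule neg_unit_rooted_if_sign_alternates)
    show "degree ?Q \<le> Suc d"
      by (intro degree_even_step neg_unit_rooted_degree assms)
    show "t i < t (Suc i)" if "i < Suc d" for i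
      using that r strict_mono_onD[OF mono, of "i - 1" i] by (auto simp: t_def image_subset_iff)
    show "-1 \<le> t 0" "t (Suc d) = 0"
      by (simp_all add: t_def)
    show "0 < (-1) ^ (Suc d - i) * poly ?Q (t i)" if i: "i \<le> Suc d" for i
    proof -
      consider "i = 0" | k where "i = Suc k" "k < d" | "i = Suc d"
        using i by (cases i) (auto simp: le_less)
      then show ?thesis
      proof cases
        case 1
        then show ?thesis
          using neg_unit_rooted_poly_minus_one[OF assms] by (simp add: t_def algebra_simps)
      next
        case (2 k)
        have "-1 < r k" "r k < 0"
          using r 2 by auto
        then have "poly [:0, 1, 0, -1:] (r k) < 0"
          using mult_strict_left_mono_neg[of "r k * r k" 1 "r k"] abs_square_less_1[of "r k"]
          by (simp add: power2_eq_square algebra_simps)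
        moreover have "t i = r k" "Suc d - i = d - k"
          using 2 by (simp_all add: t_def)
        ultimately show ?thesis
          using sign_at_root_add_mult_pderiv[OF c mono \<open>k < d\<close>, of "[:0, 1, 0, -1:]" "[:1, of_nat d + 2, of_nat d:]"]
          by (simp add: Q)
      next
        case 3
        then show ?thesis
          using neg_unit_rooted_poly_0[OF assms] by (simp add: t_def)
      qed
    qed
  qed
qed

lemma linear_eq_smult_bernoulli_pgf:
  fixes r :: real
  assumes "r < 0"
  shows "[:- r, 1:] = smult (1 - r) (bernoulli_pgf (1 / (1 - r)))"
  using assms by (simp add: bernoulli_pgf_def field_simps)

lemma neg_unit_rooted_mult_power_eq_smult_prod_bernoulli_pgf:
  assumes "neg_unit_rooted d Q"
  shows "\<exists>C p. 0 < C \<and> (\<forall>j<d + m. 0 < p j \<and> p j < 1)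
    \<and> [:1, 1:] ^ m * Q = smult C (\<Prod>j<d + m. bernoulli_pgf (p j))"
proof -
  obtain c r where c: "0 < c" and r: "r ` {..<d} \<subseteq> {-1<..<0}" and Q: "Q = smult c (\<Prod>i<d. [:- r i, 1:])"
    using assms unfolding neg_unit_rooted_def by blast
  define s where "s j = (if j < d then r j else -1)" for j
  have s_neg: "s j < 0" for j
    using r by (auto simp: s_def)
  have s_bound: "0 < 1 - s j" for j
    using s_neg[of j] by linarith
  have split: "{..<d + m} = {..<d} \<union> {d..<d + m}"
    by auto
  have "(\<Prod>j<d + m. [:- s j, 1:]) = (\<Prod>j<d. [:- s j, 1:]) * (\<Prod>j\<in>{d..<d + m}. [:- s j, 1:])"
    unfolding split by (rule prod.union_disjoint) auto
  also have "\<dots> = (\<Prod>j<d. [:- r j, 1:]) * [:1, 1:] ^ m"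
    by (simp add: s_def)
  finally have "[:1, 1:] ^ m * Q = smult c (\<Prod>j<d + m. smult (1 - s j) (bernoulli_pgf (1 / (1 - s j))))"
    using s_neg by (simp add: Q linear_eq_smult_bernoulli_pgf[symmetric] mult.commute)
  also have "\<dots> = smult (c * (\<Prod>j<d + m. 1 - s j)) (\<Prod>j<d + m. bernoulli_pgf (1 / (1 - s j)))"
    by (simp add: prod_smult)
  moreover have "0 < c * (\<Prod>j<d + m. 1 - s j)"
    using c s_bound by (intro mult_pos_pos prod_pos) auto
  moreover have "0 < 1 / (1 - s j) \<and> 1 / (1 - s j) < 1" for j
    using s_neg[of j] by (simp add: field_simps)
  ultimately show ?thesis
    by (intro exI[of _ "c * (\<Prod>j<d + m. 1 - s j)"] exI[of _ "\<lambda>j. 1 / (1 - s j)"]) simp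
qed

text \<open>The recurrence defining Rpoly, over an arbitrary coefficient ring so that it can be
  transported from the integers to the reals.\<close>

definition Rpoly_step :: "nat \<Rightarrow> 'a::idom poly \<Rightarrow> 'a poly" where
  "Rpoly_step n p = (1 + smult (of_nat n) ([:0, 1:] ^ 2)) * p + [:0, 1:] * (1 - [:0, 1:] ^ 2) * pderiv p"

lemma Rpoly_Suc: "1 \<le> n \<Longrightarrow> Rpoly (Suc n) = Rpoly_step n (Rpoly n)"
  by (cases n) (simp_all add: Rpoly_step_def)

lemma coeff_Rpoly_step:
  "coeff (Rpoly_step n p) k
    = of_nat (Suc k) * coeff p k + (if 2 \<le> k then (of_nat n + 2 - of_nat k) * coeff p (k - 2) else 0)"
proof -
  have step: "Rpoly_step n p = p + smult (of_nat n) (pCons 0 (pCons 0 p)) + pCons 0 (pderiv p)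
      - pCons 0 (pCons 0 (pCons 0 (pderiv p)))"
    by (simp add: Rpoly_step_def power2_eq_square algebra_simps)
  show ?thesis
    unfolding step by (cases k; cases "k - 1"; cases "k - 2") (auto simp: coeff_pderiv algebra_simps)
qed

lemma map_poly_of_int_Rpoly_step:
  "map_poly (of_int :: int \<Rightarrow> 'a::idom) (Rpoly_step n p) = Rpoly_step n (map_poly of_int p)"
  by (rule poly_eqI) (simp add: coeff_map_poly coeff_Rpoly_step)

definition Rpoly_real :: "nat \<Rightarrow> real poly" where
  "Rpoly_real n = map_poly of_int (Rpoly n)"

lemma Rpoly_real_Suc_0: "Rpoly_real (Suc 0) = [:1, 1:]"
  by (simp add: Rpoly_real_def map_poly_pCons)

lemma Rpoly_real_Suc: "1 \<le> n \<Longrightarrow> Rpoly_real (Suc n) = Rpoly_step n (Rpoly_real n)"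
  by (simp add: Rpoly_real_def Rpoly_Suc map_poly_of_int_Rpoly_step)

lemma coeff_Rpoly_real: "coeff (Rpoly_real n) k = of_int (Rnk n k)"
  by (simp add: Rpoly_real_def Rnk_def coeff_map_poly)

lemma pderiv_linear_power_mult:
  fixes Q :: "real poly"
  shows "pderiv ([:1, 1:] ^ Suc m * Q) = [:1, 1:] ^ m * ([:1, 1:] * pderiv Q + smult (of_nat (Suc m)) Q)"
  unfolding pderiv_mult pderiv_power_Suc by (simp add: pderiv_pCons algebra_simps del: of_nat_Suc)

lemma Rpoly_step_odd:
  fixes Q :: "real poly"
  assumes "n = Suc (2 * m)"
  shows "Rpoly_step n ([:1, 1:] ^ Suc m * Q)
    = [:1, 1:] ^ Suc (Suc m) * ([:1, of_nat m:] * Q + [:0, 1, -1:] * pderiv Q)"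
proof (rule poly_ext)
  fix x :: real
  show "poly (Rpoly_step n ([:1, 1:] ^ Suc m * Q)) x
    = poly ([:1, 1:] ^ Suc (Suc m) * ([:1, of_nat m:] * Q + [:0, 1, -1:] * pderiv Q)) x"
    unfolding Rpoly_step_def pderiv_linear_power_mult assms
    by (simp add: algebra_simps power2_eq_square)
qed

lemma Rpoly_step_even:
  fixes Q :: "real poly"
  assumes "n = 2 * Suc d"
  shows "Rpoly_step n ([:1, 1:] ^ Suc (Suc d) * Q)
    = [:1, 1:] ^ Suc (Suc d) * ([:1, of_nat d + 2, of_nat d:] * Q + [:0, 1, 0, -1:] * pderiv Q)"
proof (rule poly_ext)
  fix x :: real
  show "poly (Rpoly_step n ([:1, 1:] ^ Suc (Suc d) * Q)) x
    = poly ([:1, 1:] ^ Suc (Suc d) * ([:1, of_nat d + 2, of_nat d:] * Q + [:0, 1, 0, -1:] * pderiv Q)) x"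
    unfolding Rpoly_step_def pderiv_linear_power_mult assms
    by (simp add: algebra_simps power2_eq_square)
qed

lemma Rpoly_real_factorization:
  assumes "1 \<le> n"
  shows "\<exists>Q. neg_unit_rooted ((n - 1) div 2) Q \<and> Rpoly_real n = [:1, 1:] ^ (n div 2 + 1) * Q"
  using assms
proof (induction n rule: nat_induct_at_least)
  case base
  have "neg_unit_rooted 0 1"
    unfolding neg_unit_rooted_def by (rule exI[of _ 1]) auto
  then show ?case
    by (intro exI[of _ 1]) (simp add: Rpoly_real_Suc_0)
next
  case (Suc n)
  then obtain Q where Q: "neg_unit_rooted ((n - 1) div 2) Q"
    and R: "Rpoly_real (Suc n) = Rpoly_step n ([:1, 1:] ^ (n div 2 + 1) * Q)"
    by (auto simp: Rpoly_real_Suc)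
  show ?case
  proof (cases "even n")
    case True
    then obtain k where "n = 2 * k"
      by (elim evenE)
    moreover obtain d where "k = Suc d"
      using Suc.hyps \<open>n = 2 * k\<close> by (cases k) auto
    ultimately have n: "n = 2 * Suc d"
      by simp
    then have exps: "n div 2 + 1 = Suc (Suc d)" "(n - 1) div 2 = d"
      "(Suc n - 1) div 2 = Suc d" "Suc n div 2 + 1 = Suc (Suc d)"
      by simp_all
    show ?thesis
      unfolding exps(3,4) using R Q neg_unit_rooted_even_step[of d Q]
      unfolding exps(1,2) Rpoly_step_even[OF n] by blast
  next
    case False
    then obtain m where n: "n = Suc (2 * m)"
      by (auto elim!: oddE)
    then have exps: "n div 2 + 1 = Suc m" "(n - 1) div 2 = m"
      "(Suc n - 1) div 2 = m" "Suc n div 2 + 1 = Suc (Suc m)"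
      by simp_all
    show ?thesis
      unfolding exps(3,4) using R Q neg_unit_rooted_odd_step[of m Q]
      unfolding exps(1,2) Rpoly_step_odd[OF n] by blast
  qed
qed

lemma Rpoly_real_eq_smult_prod_bernoulli_pgf:
  assumes "1 \<le> n"
  shows "\<exists>C p. 0 < C \<and> (\<forall>j<n. 0 < p j \<and> p j < 1) \<and> Rpoly_real n = smult C (\<Prod>j<n. bernoulli_pgf (p j))"
proof -
  obtain Q where "neg_unit_rooted ((n - 1) div 2) Q" "Rpoly_real n = [:1, 1:] ^ (n div 2 + 1) * Q"
    using Rpoly_real_factorization[OF assms] by blast
  moreover have "(n - 1) div 2 + (n div 2 + 1) = n"
    using assms by linarith
  ultimately show ?thesis
    using neg_unit_rooted_mult_power_eq_smult_prod_bernoulli_pgf[of "(n - 1) div 2" Q "n div 2 + 1"]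
    by metis
qed

lemma poly_Rpoly_step_1: "poly (Rpoly_step n p) 1 = (1 + of_nat n) * poly p 1"
  by (simp add: Rpoly_step_def)

lemma poly_pderiv_Rpoly_step_1:
  "poly (pderiv (Rpoly_step n p)) 1 = 2 * of_nat n * poly p 1 + (of_nat n - 1) * poly (pderiv p) 1"
  by (simp add: Rpoly_step_def pderiv_mult pderiv_add pderiv_diff pderiv_minus pderiv_smult pderiv_power_Suc
      pderiv_pCons numeral_2_eq_2 algebra_simps)

lemma Rpoly_real_mean:
  assumes "2 \<le> n"
  shows "3 * poly (pderiv (Rpoly_real n)) 1 = (2 * real n - 1) * poly (Rpoly_real n) 1"
  using assms
proof (induction n rule: nat_induct_at_least)
  case base
  show ?case
    using Rpoly_real_Suc[of 1]
    by (simp add: poly_pderiv_Rpoly_step_1 poly_Rpoly_step_1 Rpoly_real_Suc_0 pderiv_pCons numeral_2_eq_2)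
next
  case (Suc n)
  define a where "a = poly (Rpoly_real n) 1"
  define b where "b = poly (pderiv (Rpoly_real n)) 1"
  have "3 * poly (pderiv (Rpoly_real (Suc n))) 1 = 6 * real n * a + (real n - 1) * (3 * b)"
    using Suc.hyps by (simp add: Rpoly_real_Suc poly_pderiv_Rpoly_step_1 a_def b_def)
  also have "3 * b = (2 * real n - 1) * a"
    using Suc.IH by (simp add: a_def b_def)
  also have "6 * real n * a + (real n - 1) * ((2 * real n - 1) * a) = (2 * real (Suc n) - 1) * ((1 + real n) * a)"
    by (simp add: algebra_simps)
  also have "(1 + real n) * a = poly (Rpoly_real (Suc n)) 1"
    using Suc.hyps by (simp add: Rpoly_real_Suc poly_Rpoly_step_1 a_def)
  finally show ?case .
qed

lemma Rnk_mode_near_mean: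
  assumes "2 \<le> n" "i \<le> n" "\<And>k. k \<le> n \<Longrightarrow> Rnk n k \<le> Rnk n i"
  shows "\<bar>real i - (2 * real n - 1) / 3\<bar> < 1"
proof -
  obtain C p where C: "0 < C" and p: "\<forall>j<n. 0 < p j \<and> p j < 1"
    and R: "Rpoly_real n = smult C (\<Prod>j<n. bernoulli_pgf (p j))"
    using Rpoly_real_eq_smult_prod_bernoulli_pgf[of n] assms(1) by auto
  have "C * (3 * (\<Sum>j<n. p j)) = C * (2 * real n - 1)"
    using Rpoly_real_mean[OF assms(1)]
    by (simp add: R pderiv_smult poly_prod_bernoulli_pgf_1 poly_pderiv_prod_bernoulli_pgf_1 algebra_simps)
  then have mean: "(\<Sum>j<n. p j) = (2 * real n - 1) / 3"
    using C by simp
  have "C * coeff (\<Prod>j<n. bernoulli_pgf (p j)) k \<le> C * coeff (\<Prod>j<n. bernoulli_pgf (p j)) i"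
    if "k \<le> n" for k
    using assms(3)[OF that] by (metis R coeff_Rpoly_real coeff_smult of_int_le_iff)
  then have "\<bar>real i - (\<Sum>j<n. p j)\<bar> < 1"
    using C p assms(2) by (intro prod_bernoulli_pgf_mode_near_mean) auto
  then show ?thesis
    by (simp add: mean)
qed

lemma dist_less_one_floor_ceiling:
  fixes x :: real and i :: int
  assumes "\<bar>of_int i - x\<bar> < 1"
  shows "if x \<in> \<int> then of_int i = x else i = \<lfloor>x\<rfloor> \<or> i = \<lceil>x\<rceil>"
proof (cases "x \<in> \<int>")
  case True
  then obtain z where "x = of_int z"
    by (elim Ints_cases)
  then show ?thesis
    using assms by simp
next
  case False
  then have "\<lceil>x\<rceil> = \<lfloor>x\<rfloor> + 1"
    by (metis Ints_of_int ceiling_altdef)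
  moreover have "\<lfloor>x\<rfloor> \<le> i" "i \<le> \<lceil>x\<rceil>"
    using assms by (simp_all add: floor_le_iff le_ceiling_iff abs_less_iff)
  ultimately show ?thesis
    using False by auto
qed

theorem mainTheorem7:
  fixes n i :: nat
  assumes "n \<ge> 1"
    and "i \<le> n"
    and "Rnk n i = Max ((\<lambda>k. Rnk n k) ` {0..n})"
  shows "(if (2 * real n - 1) / 3 \<in> \<int>
          then real i = (2 * real n - 1) / 3
          else (int i = \<lfloor>(2 * real n - 1) / 3\<rfloor> \<or> int i = \<lceil>(2 * real n - 1) / 3\<rceil>))"
proof -
  have "\<bar>real i - (2 * real n - 1) / 3\<bar> < 1"
  proof (cases "n = 1")
    case True
    \<comment> \<open>R_1 = 1 + x has mean 1/2 rather than 1/3, but both of its indices lie within 1 of 1/3.\<close>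
    then show ?thesis
      using assms(2) by auto
  next
    case False
    have "Rnk n k \<le> Rnk n i" if "k \<le> n" for k
      unfolding assms(3) using that by (intro Max_ge) auto
    then show ?thesis
      using False assms(1,2) by (intro Rnk_mode_near_mean) auto
  qed
  then show ?thesis
    using dist_less_one_floor_ceiling[of "int i" "(2 * real n - 1) / 3"]
    by (metis of_int_of_nat_eq)
qed

end
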